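(* Let $P$ be an $n\times n$ stochastic SIA matrix satisfying the pattern-symmetry condition $p_{ij}>0\Leftrightarrow p_{ji}>0$ for all $i\neq j$. Then (1) $P\in\mathcal S_2$, i.e., the SIA index of $P$ is at most $2$; and (2) if moreover $P$ is symmetric, then $P\in\mathcal S_1$, i.e., $P$ is a Sarymsakov matrix.
   Context: Let $\mathcal N=\{1,\ldots,n\}$. A matrix is stochastic if it is entrywise nonnegative with row sums $1$. For stochastic $P$ and $\mathcal A\subseteq\mathcal N$, $F_P(\mathcal A)=\{j:\ p_{ij}>0\text{ for some } i\in\mathcal A\}$, $F_P^1=F_P$, $F_P^k(\mathcal A)=F_P(F_P^{k-1}(\mathcal A))$. $P$ is SIA if $\lim_{m\to\infty}P^m=\mathbf 1c^T$ for some nonnegative $c$ with entries summing to $1$. For an SIA matrix $P$ and each unordered pair of disjoint nonempty sets $\mathcal A,\tilde{\mathcal A}\subseteq\mathcal N$, let $s(\mathcal A,\tilde{\mathcal A})$ be the smallest integer $k\ge1$ such that either (i) $F_P^k(\mathcal A)\cap F_P^k(\tilde{\mathcal A})\ne\emptyset$, or (ii) $F_P^k(\mathcal A)\cap F_P^k(\tilde{\mathcal A})=\emptyset$ and $|F_P^k(\mathcal A)\cup F_P^k(\tilde{\mathcal A})|>|\mathcal A\cup\tilde{\mathcal A}|$. The SIA index of $P$ is the maximum of $s(\mathcal A,\tilde{\mathcal A})$ over all such pairs. $\mathcal S_k$ is the set of $n\times n$ SIA matrices with SIA index at most $k$; $\mathcal S_1$ is the set of stochastic Sarymsakov matrices.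 *)

theory Defs
  imports "HOL-Analysis.Analysis"
begin

text \<open>Square matrices indexed by a finite type 'n (n = CARD('n)).\<close>

definition stochastic :: "real^'n^'n \<Rightarrow> bool" where
  "stochastic P \<longleftrightarrow> (\<forall>i j. P $ i $ j \<ge> 0) \<and> (\<forall>i. (\<Sum>j\<in>UNIV. P $ i $ j) = 1)"

fun mpow :: "real^'n^'n \<Rightarrow> nat \<Rightarrow> real^'n^'n" where
  "mpow P 0 = mat 1"
| "mpow P (Suc m) = mpow P m ** P"

definition SIA :: "real^'n^'n \<Rightarrow> bool" where
  "SIA P \<longleftrightarrow> stochastic P \<and>
     (\<exists>c::real^'n. (\<forall>j. c $ j \<ge> 0) \<and> (\<Sum>j\<in>UNIV. c $ j) = 1 \<and>
        (\<lambda>m. mpow P m) \<longlonglongrightarrow> (\<chi> i j. c $ j))"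

definition F :: "real^'n^'n \<Rightarrow> 'n set \<Rightarrow> 'n set" where
  "F P A = {j. \<exists>i\<in>A. P $ i $ j > 0}"

definition Fpow :: "real^'n^'n \<Rightarrow> nat \<Rightarrow> 'n set \<Rightarrow> 'n set" where
  "Fpow P k = (F P ^^ k)"

definition s_cond :: "real^'n^'n \<Rightarrow> 'n set \<Rightarrow> 'n set \<Rightarrow> nat \<Rightarrow> bool" where
  "s_cond P A B k \<longleftrightarrow>
     Fpow P k A \<inter> Fpow P k B \<noteq> {} \<or>
     (Fpow P k A \<inter> Fpow P k B = {} \<and> card (Fpow P k A \<union> Fpow P k B) > card (A \<union> B))"

definition s_val :: "real^'n^'n \<Rightarrow> 'n set \<Rightarrow> 'n set \<Rightarrow> nat" where
  "s_val P A B = (LEAST k. k \<ge> 1 \<and> s_cond P A B k)"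

definition SIA_index :: "real^'n^'n \<Rightarrow> nat" where
  "SIA_index P = Sup {s_val P A B | A B. A \<noteq> {} \<and> B \<noteq> {} \<and> A \<inter> B = {}}"

definition S_class :: "nat \<Rightarrow> (real^'n^'n) set" where
  "S_class k = {P. SIA P \<and> SIA_index P \<le> k}"

end

theory Submission
  imports Defs
begin

text \<open>
  Since \<open>P\<close> is SIA, every two rows of \<open>P\<^sup>m\<close> share a
  positive column for large \<open>m\<close>, so \<open>A\<close> and \<open>B\<close> cannot both be invariant under \<open>F\<^sub>P\<^sup>k\<close> for a
  \<open>k \<ge> 1\<close>. Pattern symmetry gives \<open>A \<subseteq> F\<^sub>P\<^sup>2(A)\<close> (walk out along a positive entry and back),
  so if \<open>F\<^sub>P\<^sup>2(A)\<close> and \<open>F\<^sub>P\<^sup>2(B)\<close> were disjoint without growing, both sets would be invariant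
  under \<open>F\<^sub>P\<^sup>2\<close>. For symmetric \<open>P\<close>, summing the columns of \<open>F\<^sub>P(S)\<close> shows
  \<open>|F\<^sub>P(S)| = |S| + (mass entering F\<^sub>P(S) from outside S)\<close>; if \<open>F\<^sub>P\<close> does not grow \<open>A \<union> B\<close>
  this mass vanishes for both sets, which again makes them invariant under \<open>F\<^sub>P\<^sup>2\<close>.
\<close>

lemma SIA_index_le:
  fixes P :: "real^'n^'n"
  assumes "\<And>A B. A \<noteq> {} \<Longrightarrow> B \<noteq> {} \<Longrightarrow> A \<inter> B = {} \<Longrightarrow> s_val P A B \<le> k"
  shows "SIA_index P \<le> k"
proof -
  let ?X = "{s_val P A B | A B. A \<noteq> {} \<and> B \<noteq> {} \<and> A \<inter> B = {}}"
  have bound: "\<forall>x\<in>?X. x \<le> k" using assms by blast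
  show ?thesis
  proof (cases "?X = {}")
    case True
    then show ?thesis unfolding SIA_index_def by (metis Sup_nat_empty zero_le)
  next
    case False
    moreover have "bdd_above ?X" using bound by (meson bdd_above.I)
    ultimately show ?thesis unfolding SIA_index_def using bound by (simp add: cSup_le_iff)
  qed
qed

lemma s_val_le:
  assumes "s_cond P A B k" "1 \<le> k"
  shows "s_val P A B \<le> k"
  unfolding s_val_def by (rule Least_le) (use assms in simp)

lemma stochastic_nonneg: "stochastic P \<Longrightarrow> 0 \<le> P $ i $ j"
  unfolding stochastic_def by blast

lemma stochastic_row_has_positive:
  assumes "stochastic P"
  obtains j where "0 < P $ i $ j"
proof -
  have "(\<Sum>j\<in>UNIV. P $ i $ j) \<noteq> 0" using assms unfolding stochastic_def by simp
  then obtain j where "P $ i $ j \<noteq> 0" by (meson sum.neutral)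
  then show thesis using that stochastic_nonneg[OF assms] by (metis less_le)
qed

lemma mpow_nonneg:
  assumes "\<And>i j. 0 \<le> P $ i $ j"
  shows "0 \<le> mpow P m $ i $ j"
  by (induction m arbitrary: i j)
    (simp_all add: mat_def matrix_matrix_mult_def sum_nonneg assms)

lemma Fpow_eq_positive_entries_mpow:
  assumes nonneg: "\<And>i j. 0 \<le> P $ i $ j"
  shows "Fpow P m S = {j. \<exists>i\<in>S. 0 < mpow P m $ i $ j}"
proof (induction m)
  case 0
  then show ?case by (auto simp: Fpow_def mat_def)
next
  case (Suc m)
  have products_nonneg: "0 \<le> mpow P m $ i $ k * P $ k $ j" for i k j
    using mpow_nonneg[OF nonneg] nonneg by simp
  have "0 < mpow P (Suc m) $ i $ j \<longleftrightarrow> (\<exists>k. 0 < mpow P m $ i $ k * P $ k $ j)" for i j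
  proof -
    have "0 < (\<Sum>k\<in>UNIV. mpow P m $ i $ k * P $ k $ j)
        \<longleftrightarrow> (\<exists>k. mpow P m $ i $ k * P $ k $ j \<noteq> 0)"
      using products_nonneg sum_nonneg_eq_0_iff[of UNIV "\<lambda>k. mpow P m $ i $ k * P $ k $ j"]
      by (simp add: less_le sum_nonneg)
    then show ?thesis using products_nonneg by (simp add: matrix_matrix_mult_def less_le)
  qed
  then have "0 < mpow P (Suc m) $ i $ j \<longleftrightarrow> (\<exists>k. 0 < mpow P m $ i $ k \<and> 0 < P $ k $ j)"
    for i j using mpow_nonneg[OF nonneg, of m i] nonneg by (simp add: zero_less_mult_iff less_le)
  then show ?case
    using Suc by (auto simp: Fpow_def F_def)
qed

lemma SIA_eventually_common_positive_column:
  fixes P :: "real^'n^'n"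
  assumes "SIA P"
  shows "eventually (\<lambda>m. \<exists>j. 0 < mpow P m $ i $ j \<and> 0 < mpow P m $ i' $ j) sequentially"
proof -
  obtain c :: "real^'n" where c: "\<forall>j. 0 \<le> c $ j" "(\<Sum>j\<in>UNIV. c $ j) = 1"
    and lim: "(\<lambda>m. mpow P m) \<longlonglongrightarrow> (\<chi> i j. c $ j)"
    using assms unfolding SIA_def by blast
  obtain j where j: "0 < c $ j"
    using c by (metis less_le sum.neutral zero_neq_one)
  have "(\<lambda>m. mpow P m $ x $ j) \<longlonglongrightarrow> c $ j" for x
    using tendsto_vec_nth[OF tendsto_vec_nth[OF lim], of x j] by simp
  then have "eventually (\<lambda>m. 0 < mpow P m $ x $ j) sequentially" for x
    using j by (rule order_tendstoD(1))
  then have "eventually (\<lambda>m. 0 < mpow P m $ i $ j \<and> 0 < mpow P m $ i' $ j) sequentially"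
    by (intro eventually_conj)
  then show ?thesis
    by (rule eventually_mono) blast
qed

lemma F_mono: "mono (F P)"
  unfolding F_def mono_def by auto

lemma Fpow_mult_subset:
  assumes "Fpow P k A \<subseteq> A"
  shows "Fpow P (k * m) A \<subseteq> A"
proof (induction m)
  case 0
  then show ?case by (simp add: Fpow_def)
next
  case (Suc m)
  have "Fpow P (k * Suc m) A = Fpow P k (Fpow P (k * m) A)"
    by (simp add: Fpow_def funpow_add)
  also have "\<dots> \<subseteq> Fpow P k A"
    using Suc unfolding Fpow_def by (rule funpow_mono[OF F_mono])
  finally show ?case using assms by blast
qed

lemma SIA_no_disjoint_Fpow_invariant_sets:
  fixes P :: "real^'n^'n"
  assumes "SIA P" "1 \<le> k"
    and "A \<noteq> {}" "B \<noteq> {}" "A \<inter> B = {}"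
    and "Fpow P k A \<subseteq> A" "Fpow P k B \<subseteq> B"
  shows False
proof -
  have "stochastic P" using assms(1) unfolding SIA_def by blast
  obtain i i' where "i \<in> A" "i' \<in> B" using assms(3,4) by blast
  obtain M where "\<forall>m\<ge>M. \<exists>j. 0 < mpow P m $ i $ j \<and> 0 < mpow P m $ i' $ j"
    using SIA_eventually_common_positive_column[OF assms(1)] unfolding eventually_sequentially
    by blast
  moreover have "M \<le> k * M" using assms(2) by simp
  ultimately obtain j where "0 < mpow P (k * M) $ i $ j" "0 < mpow P (k * M) $ i' $ j"
    by blast
  with \<open>i \<in> A\<close> \<open>i' \<in> B\<close> have "j \<in> Fpow P (k * M) A" "j \<in> Fpow P (k * M) B"
    using Fpow_eq_positive_entries_mpow[OF stochastic_nonneg[OF \<open>stochastic P\<close>]] by auto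
  then have "j \<in> A" "j \<in> B"
    using Fpow_mult_subset assms(6,7) by blast+
  with assms(5) show False by blast
qed

lemma subset_F_F_if_pattern_symmetric:
  fixes P :: "real^'n^'n"
  assumes "stochastic P" and pattern_sym: "\<forall>i j. i \<noteq> j \<longrightarrow> (0 < P $ i $ j \<longleftrightarrow> 0 < P $ j $ i)"
  shows "A \<subseteq> F P (F P A)"
proof
  fix i assume "i \<in> A"
  obtain j where "0 < P $ i $ j" using stochastic_row_has_positive[OF assms(1)] .
  moreover from this have "0 < P $ j $ i" using pattern_sym by (cases "i = j") auto
  ultimately show "i \<in> F P (F P A)" using \<open>i \<in> A\<close> unfolding F_def by blast
qed

lemma s_cond_2_if_pattern_symmetric:
  fixes P :: "real^'n^'n"
  assumes "stochastic P" "SIA P"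
    and "\<forall>i j. i \<noteq> j \<longrightarrow> (0 < P $ i $ j \<longleftrightarrow> 0 < P $ j $ i)"
    and "A \<noteq> {}" "B \<noteq> {}" "A \<inter> B = {}"
  shows "s_cond P A B 2"
proof (rule ccontr)
  assume "\<not> s_cond P A B 2"
  then have disjoint: "Fpow P 2 A \<inter> Fpow P 2 B = {}"
    and no_growth: "card (Fpow P 2 A \<union> Fpow P 2 B) \<le> card (A \<union> B)"
    unfolding s_cond_def by auto
  have "A \<subseteq> Fpow P 2 A" "B \<subseteq> Fpow P 2 B"
    using subset_F_F_if_pattern_symmetric[OF assms(1,3)] by (simp_all add: Fpow_def numeral_2_eq_2)
  moreover from this have "A \<union> B = Fpow P 2 A \<union> Fpow P 2 B"
    using no_growth by (intro card_seteq) auto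
  ultimately have "Fpow P 2 A \<subseteq> A" "Fpow P 2 B \<subseteq> B"
    using disjoint by blast+
  then show False
    using SIA_no_disjoint_Fpow_invariant_sets[OF assms(2) _ assms(4-6), of 2] by simp
qed

definition inflow :: "real^'n^'n \<Rightarrow> 'n set \<Rightarrow> real" where
  "inflow P S = (\<Sum>j\<in>F P S. \<Sum>i\<in>-S. P $ i $ j)"

lemma inflow_nonneg: "stochastic P \<Longrightarrow> 0 \<le> inflow P S"
  unfolding inflow_def by (intro sum_nonneg) (simp add: stochastic_nonneg)

lemma card_F_eq_card_add_inflow:
  fixes P :: "real^'n^'n"
  assumes "stochastic P" and column_sums: "\<And>j. (\<Sum>i\<in>UNIV. P $ i $ j) = 1"
  shows "real (card (F P S)) = real (card S) + inflow P S"
proof -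
  have row_sums: "(\<Sum>j\<in>F P S. P $ i $ j) = 1" if "i \<in> S" for i
  proof -
    have "(\<Sum>j\<in>F P S. P $ i $ j) = (\<Sum>j\<in>UNIV. P $ i $ j)"
      using that stochastic_nonneg[OF assms(1)]
      by (intro sum.mono_neutral_left) (auto simp: F_def less_le)
    then show ?thesis using assms(1) unfolding stochastic_def by simp
  qed
  have "real (card (F P S)) = (\<Sum>j\<in>F P S. \<Sum>i\<in>UNIV. P $ i $ j)"
    by (simp add: column_sums)
  also have "\<dots> = (\<Sum>j\<in>F P S. (\<Sum>i\<in>S. P $ i $ j) + (\<Sum>i\<in>-S. P $ i $ j))"
    by (intro sum.cong refl) (metis Compl_partition Compl_disjoint finite sum.union_disjoint)
  also have "\<dots> = (\<Sum>i\<in>S. \<Sum>j\<in>F P S. P $ i $ j) + inflow P S"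
    unfolding inflow_def by (simp add: sum.distrib sum.swap[of _ "F P S" S])
  also have "\<dots> = real (card S) + inflow P S"
    by (simp add: row_sums)
  finally show ?thesis .
qed

lemma F_F_subset_if_inflow_eq_0:
  fixes P :: "real^'n^'n"
  assumes "stochastic P" and pattern_sym: "\<And>i j. 0 < P $ i $ j \<Longrightarrow> 0 < P $ j $ i"
    and "inflow P S = 0"
  shows "F P (F P S) \<subseteq> S"
proof
  fix x assume "x \<in> F P (F P S)"
  then obtain j where j: "j \<in> F P S" "0 < P $ j $ x" unfolding F_def by blast
  have "\<forall>j\<in>F P S. (\<Sum>i\<in>-S. P $ i $ j) = 0"
    using assms(3) stochastic_nonneg[OF assms(1)] unfolding inflow_def
    by (subst (asm) sum_nonneg_eq_0_iff) (auto intro: sum_nonneg)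
  then have "\<forall>i\<in>-S. P $ i $ j = 0"
    using j(1) stochastic_nonneg[OF assms(1)] by (simp add: sum_nonneg_eq_0_iff)
  moreover have "0 < P $ x $ j" using pattern_sym j(2) .
  ultimately show "x \<in> S" by (metis ComplI less_irrefl)
qed

lemma s_cond_1_if_symmetric:
  fixes P :: "real^'n^'n"
  assumes "stochastic P" "SIA P" "transpose P = P"
    and "A \<noteq> {}" "B \<noteq> {}" "A \<inter> B = {}"
  shows "s_cond P A B 1"
proof (rule ccontr)
  assume "\<not> s_cond P A B 1"
  then have disjoint: "F P A \<inter> F P B = {}"
    and no_growth: "card (F P A \<union> F P B) \<le> card (A \<union> B)"
    unfolding s_cond_def by (simp_all add: Fpow_def)
  have sym: "P $ j $ i = P $ i $ j" for i j
    using assms(3) by (metis transpose_def vec_lambda_beta)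
  have "(\<Sum>i\<in>UNIV. P $ i $ j) = (\<Sum>i\<in>UNIV. P $ j $ i)" for j
    by (intro sum.cong refl) (rule sym[symmetric])
  then have "(\<Sum>i\<in>UNIV. P $ i $ j) = 1" for j
    using assms(1) unfolding stochastic_def by simp
  then have "real (card (F P A)) + real (card (F P B))
      = real (card A) + real (card B) + inflow P A + inflow P B"
    using card_F_eq_card_add_inflow[OF assms(1)] by simp
  moreover have "card (F P A) + card (F P B) \<le> card A + card B"
    using no_growth disjoint assms(6) by (simp add: card_Un_disjoint)
  ultimately have "inflow P A = 0" "inflow P B = 0"
    using inflow_nonneg[OF assms(1), of A] inflow_nonneg[OF assms(1), of B] by linarith+
  then have "Fpow P 2 A \<subseteq> A" "Fpow P 2 B \<subseteq> B"
    using F_F_subset_if_inflow_eq_0[OF assms(1)] sym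
    by (simp_all add: Fpow_def numeral_2_eq_2)
  then show False
    using SIA_no_disjoint_Fpow_invariant_sets[OF assms(2) _ assms(4-6), of 2] by simp
qed

theorem proposition2:
  fixes P :: "real^'n^'n"
  assumes "stochastic P" and "SIA P"
    and "\<forall>i j. i \<noteq> j \<longrightarrow> (P $ i $ j > 0 \<longleftrightarrow> P $ j $ i > 0)"
  shows "P \<in> S_class 2 \<and> (transpose P = P \<longrightarrow> P \<in> S_class 1)"
proof (intro conjI impI)
  have "SIA_index P \<le> 2"
    using s_cond_2_if_pattern_symmetric[OF assms] by (intro SIA_index_le s_val_le) auto
  then show "P \<in> S_class 2" using assms(2) by (simp add: S_class_def)
next
  assume "transpose P = P"
  then have "SIA_index P \<le> 1"
    using s_cond_1_if_symmetric[OF assms(1,2)] by (intro SIA_index_le s_val_le) auto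
  then show "P \<in> S_class 1" using assms(2) by (simp add: S_class_def)
qed

end
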